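(* For every integer $r\ge 0$: \begin{align*} \mathrm{LCD}[6r+3,2] &< 4r+3,\\ \mathrm{LCD}[6r+4,2] &< 4r+3,\\ \mathrm{LCD}[6r+7,2] &< 4r+5,\\ \mathrm{LCD}[6r+8,2] &< 4r+6. \end{align*}
   Context: All codes are binary linear codes, i.e. subspaces of $\mathbb{F}_2^n$; an $[n,k,d]$ code is one of length $n$, dimension $k$ and minimum Hamming distance $d$. A linear code $C$ is an LCD code if $C\cap C^\perp=\{0\}$, where $C^\perp$ is the dual with respect to the standard dot product. For positive integers $n\ge k$, $\mathrm{LCD}[n,k]$ denotes the largest $d$ such that there exists a binary $[n,k,d]$ LCD code. *)

theory Defs
  imports Main
begin

text \<open>Vectors of F_2^n are represented as functions nat => bool (True = 1)
  vanishing outside the index set {0..<n}. Addition over F_2 is XOR.\<close>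

definition F2vecs :: "nat \<Rightarrow> (nat \<Rightarrow> bool) set" where
  "F2vecs n = {x. \<forall>i\<ge>n. \<not> x i}"

definition vzero :: "nat \<Rightarrow> bool" where
  "vzero = (\<lambda>i. False)"

definition vadd :: "(nat \<Rightarrow> bool) \<Rightarrow> (nat \<Rightarrow> bool) \<Rightarrow> (nat \<Rightarrow> bool)" where
  "vadd x y = (\<lambda>i. x i \<noteq> y i)"

definition dot_zero :: "nat \<Rightarrow> (nat \<Rightarrow> bool) \<Rightarrow> (nat \<Rightarrow> bool) \<Rightarrow> bool" where
  "dot_zero n x y \<longleftrightarrow> even (card {i. i < n \<and> x i \<and> y i})"

definition hamming_dist :: "nat \<Rightarrow> (nat \<Rightarrow> bool) \<Rightarrow> (nat \<Rightarrow> bool) \<Rightarrow> nat" where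
  "hamming_dist n x y = card {i. i < n \<and> x i \<noteq> y i}"

text \<open>A binary linear code of length n: an F_2-subspace of F_2^n
  (scalar multiplication over F_2 is trivial, so: contains 0 and closed under +).\<close>
definition linear_code :: "nat \<Rightarrow> (nat \<Rightarrow> bool) set \<Rightarrow> bool" where
  "linear_code n C \<longleftrightarrow> C \<subseteq> F2vecs n \<and> vzero \<in> C \<and> (\<forall>x\<in>C. \<forall>y\<in>C. vadd x y \<in> C)"

text \<open>An F_2-subspace has dimension k iff it has exactly 2^k elements.\<close>
definition code_dim :: "(nat \<Rightarrow> bool) set \<Rightarrow> nat \<Rightarrow> bool" where
  "code_dim C k \<longleftrightarrow> card C = 2 ^ k"

definition min_dist :: "nat \<Rightarrow> (nat \<Rightarrow> bool) set \<Rightarrow> nat" where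
  "min_dist n C = Min {hamming_dist n x y | x y. x \<in> C \<and> y \<in> C \<and> x \<noteq> y}"

definition dual_code :: "nat \<Rightarrow> (nat \<Rightarrow> bool) set \<Rightarrow> (nat \<Rightarrow> bool) set" where
  "dual_code n C = {y \<in> F2vecs n. \<forall>x\<in>C. dot_zero n x y}"

definition is_LCD :: "nat \<Rightarrow> (nat \<Rightarrow> bool) set \<Rightarrow> bool" where
  "is_LCD n C \<longleftrightarrow> C \<inter> dual_code n C = {vzero}"

definition LCD_code :: "nat \<Rightarrow> nat \<Rightarrow> nat \<Rightarrow> (nat \<Rightarrow> bool) set \<Rightarrow> bool" where
  "LCD_code n k d C \<longleftrightarrow> linear_code n C \<and> code_dim C k \<and> min_dist n C = d \<and> is_LCD n C"

definition LCD :: "nat \<Rightarrow> nat \<Rightarrow> nat" where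
  "LCD n k = Max {d. \<exists>C. LCD_code n k d C}"

end

theory Submission
  imports Defs
begin

text \<open>Any three distinct words of a code have pairwise distances summing to at most \<open>2 n\<close>, since
  in every coordinate at most two of the three pairs differ. A code of dimension 2 has four words,
  so \<open>3 d \<le> 2 n\<close>, which is below each of the claimed bounds. The maximum defining \<open>LCD[n,2]\<close> is
  attained because some \<open>[n,2]\<close> LCD code exists: for \<open>k \<le> n\<close> the span \<open>F2vecs k\<close> of the
  first \<open>k\<close> unit vectors is an LCD code.\<close>

lemma hamming_dist_eq_sum: "hamming_dist n x y = (\<Sum>i<n. of_bool (x i \<noteq> y i))"
  unfolding hamming_dist_def by (simp add: Int_def)

lemma hamming_dist_triple_le:
  "hamming_dist n x y + hamming_dist n y z + hamming_dist n x z \<le> 2 * n"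
proof -
  have "hamming_dist n x y + hamming_dist n y z + hamming_dist n x z
      = (\<Sum>i<n. of_bool (x i \<noteq> y i) + of_bool (y i \<noteq> z i) + of_bool (x i \<noteq> z i))"
    by (simp add: hamming_dist_eq_sum sum.distrib)
  also have "\<dots> \<le> (\<Sum>i<n. 2)"
    by (intro sum_mono) auto
  finally show ?thesis
    by simp
qed

lemma min_dist_le_hamming_dist:
  assumes "finite C" "x \<in> C" "y \<in> C" "x \<noteq> y"
  shows "min_dist n C \<le> hamming_dist n x y"
proof -
  have "{hamming_dist n x y | x y. x \<in> C \<and> y \<in> C \<and> x \<noteq> y}
      \<subseteq> (\<lambda>(x, y). hamming_dist n x y) ` (C \<times> C)"
    by auto
  then have "finite {hamming_dist n x y | x y. x \<in> C \<and> y \<in> C \<and> x \<noteq> y}"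
    using assms(1) by (meson finite_SigmaI finite_imageI finite_subset)
  then show ?thesis
    unfolding min_dist_def using assms(2-4) by (intro Min_le) blast+
qed

lemma three_min_dist_le:
  assumes "3 \<le> card C"
  shows "3 * min_dist n C \<le> 2 * n"
proof -
  have "finite C"
    using assms by (metis card.infinite not_numeral_le_zero)
  obtain T where "T \<subseteq> C" "card T = 3"
    using obtain_subset_with_card_n[OF assms] by blast
  then obtain x y z where "x \<in> C" "y \<in> C" "z \<in> C" "x \<noteq> y" "y \<noteq> z" "x \<noteq> z"
    by (auto simp: card_3_iff)
  with \<open>finite C\<close> have "min_dist n C \<le> hamming_dist n x y" "min_dist n C \<le> hamming_dist n y z"
    "min_dist n C \<le> hamming_dist n x z"
    by (auto intro: min_dist_le_hamming_dist)
  then show ?thesis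
    using hamming_dist_triple_le[of n x y z] by linarith
qed

lemma linear_code_F2vecs: "k \<le> n \<Longrightarrow> linear_code n (F2vecs k)"
  by (auto simp: linear_code_def F2vecs_def vzero_def vadd_def)

lemma card_F2vecs: "card (F2vecs k) = 2 ^ k"
proof -
  have "F2vecs k = (\<lambda>S i. i \<in> S) ` Pow {..<k}"
  proof (intro equalityI subsetI)
    fix x assume "x \<in> F2vecs k"
    then have "x = (\<lambda>i. i \<in> {i. i < k \<and> x i})"
      by (auto simp: F2vecs_def fun_eq_iff) (meson not_less)
    then show "x \<in> (\<lambda>S i. i \<in> S) ` Pow {..<k}"
      by blast
  qed (auto simp: F2vecs_def)
  moreover have "inj (\<lambda>S i. i \<in> (S :: nat set))"
    by (rule injI) (simp add: fun_eq_iff set_eq_iff)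
  ultimately show ?thesis
    by (simp add: card_image inj_on_subset card_Pow)
qed

lemma is_LCD_F2vecs:
  assumes "k \<le> n"
  shows "is_LCD n (F2vecs k)"
proof -
  have "\<not> x j" if x: "x \<in> dual_code n (F2vecs k)" and "j < k" for x j
  proof -
    have "(\<lambda>i. i = j) \<in> F2vecs k"
      using \<open>j < k\<close> by (auto simp: F2vecs_def)
    then have "even (card {i. i < n \<and> i = j \<and> x i})"
      using x by (auto simp: dual_code_def dot_zero_def)
    moreover have "{i. i < n \<and> i = j \<and> x i} = (if x j then {j} else {})"
      using \<open>j < k\<close> assms by auto
    ultimately show ?thesis
      by (auto split: if_splits)
  qed
  then have "x = vzero" if "x \<in> F2vecs k \<inter> dual_code n (F2vecs k)" for x
    using that by (auto simp: F2vecs_def vzero_def fun_eq_iff) (meson not_less)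
  moreover have "vzero \<in> F2vecs k \<inter> dual_code n (F2vecs k)"
    by (simp add: F2vecs_def dual_code_def dot_zero_def vzero_def)
  ultimately show ?thesis
    unfolding is_LCD_def by blast
qed

lemma LCD_code_exists: "k \<le> n \<Longrightarrow> \<exists>d C. LCD_code n k d C"
  unfolding LCD_code_def code_dim_def
  using linear_code_F2vecs card_F2vecs is_LCD_F2vecs by blast

lemma three_LCD_dim2_le:
  assumes "2 \<le> n"
  shows "3 * LCD n 2 \<le> 2 * n"
proof -
  define D where "D = {d. \<exists>C. LCD_code n 2 d C}"
  have bounded: "3 * d \<le> 2 * n" if "d \<in> D" for d
    using that three_min_dist_le by (auto simp: D_def LCD_code_def code_dim_def)
  then have "D \<subseteq> {..2 * n}"
    by fastforce
  then have "finite D"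
    using finite_subset by blast
  moreover have "D \<noteq> {}"
    using LCD_code_exists[OF assms] by (simp add: D_def)
  ultimately have "LCD n 2 \<in> D"
    unfolding LCD_def D_def[symmetric] by (rule Max_in)
  then show ?thesis
    by (rule bounded)
qed

theorem proposition2p3:
  fixes r :: nat
  shows "LCD (6*r+3) 2 < 4*r+3 \<and> LCD (6*r+4) 2 < 4*r+3 \<and>
         LCD (6*r+7) 2 < 4*r+5 \<and> LCD (6*r+8) 2 < 4*r+6"
  using three_LCD_dim2_le[of "6*r+3"] three_LCD_dim2_le[of "6*r+4"]
    three_LCD_dim2_le[of "6*r+7"] three_LCD_dim2_le[of "6*r+8"]
  by auto

end
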